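(* Let $G=(V,E)$ be a claw-free graph, let $v_1,v_2\in V$ with $v_1v_2\notin E$, and let $w_1,w_2\in N(v_1)\cap N(v_2)$ with $w_1w_2\notin E$. Then $N[v_1]\cup N[v_2]=N[w_1]\cup N[w_2]$.
   Context: Graphs are finite, simple, undirected; claw-free means no induced $K_{1,3}$. $N(x)$ is the open and $N[x]=N(x)\cup\{x\}$ the closed neighbourhood of $x$. *)

theory Defs
  imports Main
begin

definition simple_graph :: "'a set \<Rightarrow> ('a \<Rightarrow> 'a \<Rightarrow> bool) \<Rightarrow> bool" where
  "simple_graph V E \<longleftrightarrow> finite V \<and> (\<forall>x y. E x y \<longrightarrow> E y x) \<and> (\<forall>x. \<not> E x x)
     \<and> (\<forall>x y. E x y \<longrightarrow> x \<in> V \<and> y \<in> V)"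

definition open_nbhd :: "'a set \<Rightarrow> ('a \<Rightarrow> 'a \<Rightarrow> bool) \<Rightarrow> 'a \<Rightarrow> 'a set" where
  "open_nbhd V E x = {y \<in> V. E x y}"

definition closed_nbhd :: "'a set \<Rightarrow> ('a \<Rightarrow> 'a \<Rightarrow> bool) \<Rightarrow> 'a \<Rightarrow> 'a set" where
  "closed_nbhd V E x = insert x (open_nbhd V E x)"

definition claw_free :: "'a set \<Rightarrow> ('a \<Rightarrow> 'a \<Rightarrow> bool) \<Rightarrow> bool" where
  "claw_free V E \<longleftrightarrow> \<not> (\<exists>c\<in>V. \<exists>a\<in>V. \<exists>b\<in>V. \<exists>d\<in>V.
      E c a \<and> E c b \<and> E c d \<and> a \<noteq> b \<and> a \<noteq> d \<and> b \<noteq> d \<and>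
      \<not> E a b \<and> \<not> E a d \<and> \<not> E b d)"

end

theory Submission
  imports Defs
begin

text \<open>If \<open>w\<^sub>1, w\<^sub>2\<close> are non-adjacent common neighbours of \<open>v\<^sub>i\<close>, any further neighbour of
  \<open>v\<^sub>i\<close> must see \<open>w\<^sub>1\<close> or \<open>w\<^sub>2\<close>, else \<open>v\<^sub>i\<close> is the centre of a claw. Hence
  \<open>N[v\<^sub>1] \<union> N[v\<^sub>2] \<subseteq> N[w\<^sub>1] \<union> N[w\<^sub>2]\<close>, and the hypotheses are symmetric under
  exchanging the pairs \<open>(v\<^sub>1, v\<^sub>2)\<close> and \<open>(w\<^sub>1, w\<^sub>2)\<close>.\<close>

lemma simple_graph_sym: "simple_graph V E \<Longrightarrow> E x y \<Longrightarrow> E y x"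
  unfolding simple_graph_def by blast

lemma claw_free_adj_to_nonadj_pair:
  assumes "simple_graph V E" and "claw_free V E"
    and "E c a" and "E c b" and "E c x"
    and "a \<noteq> b" and "\<not> E a b" and "x \<noteq> a" and "x \<noteq> b"
  shows "E a x \<or> E b x"
proof (rule ccontr)
  assume "\<not> (E a x \<or> E b x)"
  moreover have "c \<in> V" "a \<in> V" "b \<in> V" "x \<in> V" and "\<not> E x a" "\<not> E x b"
    using assms(1,3-5) \<open>\<not> (E a x \<or> E b x)\<close> unfolding simple_graph_def by blast+
  ultimately show False
    using assms(2-) unfolding claw_free_def by blast
qed

lemma mem_closed_nbhd_iff: "x \<in> closed_nbhd V E v \<longleftrightarrow> x = v \<or> x \<in> V \<and> E v x"
  unfolding closed_nbhd_def open_nbhd_def by blast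

lemma closed_nbhd_union_subset:
  assumes "simple_graph V E" and "claw_free V E"
    and "v1 \<in> V" and "v2 \<in> V"
    and "E v1 w1" and "E v1 w2" and "E v2 w1" and "E v2 w2"
    and "w1 \<noteq> w2" and "\<not> E w1 w2"
  shows "closed_nbhd V E v1 \<union> closed_nbhd V E v2 \<subseteq> closed_nbhd V E w1 \<union> closed_nbhd V E w2"
proof
  fix x
  assume x: "x \<in> closed_nbhd V E v1 \<union> closed_nbhd V E v2"
  have "x \<in> V"
    using x assms(3,4) by (auto simp: mem_closed_nbhd_iff)
  moreover have "x = w1 \<or> x = w2 \<or> E w1 x \<or> E w2 x"
  proof (cases "x = w1 \<or> x = w2")
    case False
    from x consider "x = v1" | "x = v2" | "E v1 x" | "E v2 x"
      by (auto simp: mem_closed_nbhd_iff)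
    then show ?thesis
    proof cases
      case 1
      then show ?thesis using simple_graph_sym[OF assms(1,5)] by simp
    next
      case 2
      then show ?thesis using simple_graph_sym[OF assms(1,7)] by simp
    next
      case 3
      then show ?thesis
        using claw_free_adj_to_nonadj_pair[OF assms(1,2,5,6) _ assms(9,10)] False by blast
    next
      case 4
      then show ?thesis
        using claw_free_adj_to_nonadj_pair[OF assms(1,2,7,8) _ assms(9,10)] False by blast
    qed
  qed blast
  ultimately show "x \<in> closed_nbhd V E w1 \<union> closed_nbhd V E w2"
    by (auto simp: mem_closed_nbhd_iff)
qed

theorem lemma7:
  fixes V :: "'a set" and E :: "'a \<Rightarrow> 'a \<Rightarrow> bool"
  assumes "simple_graph V E" and "claw_free V E"
    and "v1 \<in> V" and "v2 \<in> V" and "v1 \<noteq> v2" and "\<not> E v1 v2"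
    and "w1 \<in> open_nbhd V E v1 \<inter> open_nbhd V E v2"
    and "w2 \<in> open_nbhd V E v1 \<inter> open_nbhd V E v2"
    and "w1 \<noteq> w2" and "\<not> E w1 w2"
  shows "closed_nbhd V E v1 \<union> closed_nbhd V E v2 = closed_nbhd V E w1 \<union> closed_nbhd V E w2"
proof -
  have adj: "E v1 w1" "E v1 w2" "E v2 w1" "E v2 w2" and "w1 \<in> V" "w2 \<in> V"
    using assms(7,8) unfolding open_nbhd_def by auto
  have adj': "E w1 v1" "E w1 v2" "E w2 v1" "E w2 v2"
    using adj by (metis simple_graph_sym[OF assms(1)])+
  have "closed_nbhd V E v1 \<union> closed_nbhd V E v2 \<subseteq> closed_nbhd V E w1 \<union> closed_nbhd V E w2"
    using closed_nbhd_union_subset[OF assms(1-4) adj assms(9,10)] .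
  moreover
  have "closed_nbhd V E w1 \<union> closed_nbhd V E w2 \<subseteq> closed_nbhd V E v1 \<union> closed_nbhd V E v2"
    using closed_nbhd_union_subset[OF assms(1,2) \<open>w1 \<in> V\<close> \<open>w2 \<in> V\<close> adj' assms(5,6)] .
  ultimately show ?thesis
    by (rule subset_antisym)
qed

end
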